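(* Consider (CVOP) and its associated convex projection (Pv). (1) Let (CVOP) be bounded. If $\bar X\subseteq\mathcal{X}$ is a Hausdorff-type finite $\epsilon$-infimizer of (CVOP), then $\bar S:=\{(x,\Gamma(x)):x\in\bar X\}$ is a finite $\epsilon$-solution of (Pv). (2) Let (Pv) be self-bounded with $(\operatorname{cl}Y_a)_\infty=\operatorname{cl}C$. If $\bar S\subseteq S_a$ is a finite $\epsilon$-solution of (Pv), then $\bar X:=\operatorname{proj}_x[\bar S]$ is a Hausdorff-type finite $\xi$-infimizer of (CVOP) for every $\xi>\epsilon$.
   Context: (CVOP): $\min\Gamma(x)$ w.r.t. $\le_C$ s.t. $x\in\mathcal{X}$, with $C\subseteq\mathbb{R}^m$ a non-trivial pointed solid convex cone, $\mathcal{X}\subseteq\mathbb{R}^n$ convex, $\Gamma$ $C$-convex; upper image $\mathcal{G}=\operatorname{cl}(\Gamma[\mathcal{X}]+C)$; bounded means $\mathcal{G}\subseteq\{q\}+C$ for some $q$. Fix a $p$-norm $\|\cdot\|$ with closed balls $B_\epsilon$. Hausdorff distance $d_H(A_1,A_2)=\max\{\sup_{a_1\in A_1}\inf_{a_2\in A_2}\|a_1-a_2\|,\sup_{a_2\in A_2}\inf_{a_1\in A_1}\|a_1-a_2\|\}$. A nonempty finite $\bar X\subseteq\mathcal{X}$ is a Hausdorff-type finite $\epsilon$-infimizer of bounded (CVOP) if $d_H(\mathcal{G},\operatorname{conv}\Gamma[\bar X]+C)\le\epsilon$. (Pv): compute $Y_a=\operatorname{proj}_y[S_a]$ with $S_a=\{(x,y):x\in\mathcal{X},y\in\Gamma(x)+C\}$.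 Recession cone $A_\infty=\{y:x+\lambda y\in A\ \forall x\in A,\lambda\ge0\}$. (Pv) is self-bounded if $Y_a\ne\mathbb{R}^m$ and $Y_a\subseteq\operatorname{conv}\{y^{(1)},\dots,y^{(k)}\}+(\operatorname{cl}Y_a)_\infty$ for finitely many points; a nonempty finite $\bar S\subseteq S_a$ is a finite $\epsilon$-solution of self-bounded (Pv) if $Y_a\subseteq\operatorname{conv}\operatorname{proj}_y[\bar S]+(\operatorname{cl}Y_a)_\infty+B_\epsilon$. $\operatorname{proj}_x(x,y)=x$. *)

theory Defs
  imports "HOL-Analysis.Analysis"
begin

definition pnorm :: "ereal \<Rightarrow> real^'m \<Rightarrow> real" where
  "pnorm p y = (if p = \<infinity> then Max (range (\<lambda>i. \<bar>y $ i\<bar>))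
               else (\<Sum>i\<in>UNIV. \<bar>y $ i\<bar> powr real_of_ereal p) powr (1 / real_of_ereal p))"

definition pball :: "ereal \<Rightarrow> real \<Rightarrow> (real^'m) set" where
  "pball p eps = {y. pnorm p y \<le> eps}"

definition msum :: "('a::plus) set \<Rightarrow> 'a set \<Rightarrow> 'a set" where
  "msum A B = {a + b | a b. a \<in> A \<and> b \<in> B}"

definition hdist_p :: "ereal \<Rightarrow> (real^'m) set \<Rightarrow> (real^'m) set \<Rightarrow> ereal" where
  "hdist_p p A1 A2 = max (SUP a1\<in>A1. INF a2\<in>A2. ereal (pnorm p (a1 - a2)))
                         (SUP a2\<in>A2. INF a1\<in>A1. ereal (pnorm p (a1 - a2)))"

definition rec_cone :: "('a::real_vector) set \<Rightarrow> 'a set" where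
  "rec_cone A = {y. \<forall>x\<in>A. \<forall>t::real. t \<ge> 0 \<longrightarrow> x + t *\<^sub>R y \<in> A}"

definition ordering_cone :: "(real^'m) set \<Rightarrow> bool" where
  "ordering_cone C \<longleftrightarrow> convex_cone C \<and> C \<noteq> {0} \<and> C \<noteq> UNIV
     \<and> C \<inter> uminus ` C = {0} \<and> interior C \<noteq> {}"

definition C_convex :: "(real^'m) set \<Rightarrow> (real^'n) set \<Rightarrow> (real^'n \<Rightarrow> real^'m) \<Rightarrow> bool" where
  "C_convex C X \<Gamma> \<longleftrightarrow> (\<forall>x\<in>X. \<forall>x'\<in>X. \<forall>t::real. 0 \<le> t \<and> t \<le> 1 \<longrightarrow>
      t *\<^sub>R \<Gamma> x + (1 - t) *\<^sub>R \<Gamma> x' - \<Gamma> (t *\<^sub>R x + (1 - t) *\<^sub>R x') \<in> C)"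

definition upper_image :: "(real^'m) set \<Rightarrow> (real^'n) set \<Rightarrow> (real^'n \<Rightarrow> real^'m) \<Rightarrow> (real^'m) set" where
  "upper_image C X \<Gamma> = closure (msum (\<Gamma> ` X) C)"

definition cvop_bounded :: "(real^'m) set \<Rightarrow> (real^'n) set \<Rightarrow> (real^'n \<Rightarrow> real^'m) \<Rightarrow> bool" where
  "cvop_bounded C X \<Gamma> \<longleftrightarrow> (\<exists>q. upper_image C X \<Gamma> \<subseteq> msum {q} C)"

definition hausdorff_infimizer ::
  "ereal \<Rightarrow> real \<Rightarrow> (real^'m) set \<Rightarrow> (real^'n) set \<Rightarrow> (real^'n \<Rightarrow> real^'m) \<Rightarrow> (real^'n) set \<Rightarrow> bool" where
  "hausdorff_infimizer p eps C X \<Gamma> Xb \<longleftrightarrow> Xb \<noteq> {} \<and> finite Xb \<and> Xb \<subseteq> X \<and>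
     hdist_p p (upper_image C X \<Gamma>) (msum (convex hull (\<Gamma> ` Xb)) C) \<le> ereal eps"

definition S_a :: "(real^'m) set \<Rightarrow> (real^'n) set \<Rightarrow> (real^'n \<Rightarrow> real^'m) \<Rightarrow> ((real^'n) \<times> (real^'m)) set" where
  "S_a C X \<Gamma> = {(x, y). x \<in> X \<and> y \<in> msum {\<Gamma> x} C}"

definition Y_a :: "(real^'m) set \<Rightarrow> (real^'n) set \<Rightarrow> (real^'n \<Rightarrow> real^'m) \<Rightarrow> (real^'m) set" where
  "Y_a C X \<Gamma> = snd ` S_a C X \<Gamma>"

definition self_bounded :: "(real^'m) set \<Rightarrow> (real^'n) set \<Rightarrow> (real^'n \<Rightarrow> real^'m) \<Rightarrow> bool" where
  "self_bounded C X \<Gamma> \<longleftrightarrow> Y_a C X \<Gamma> \<noteq> UNIV \<and>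
     (\<exists>P. finite P \<and> Y_a C X \<Gamma> \<subseteq> msum (convex hull P) (rec_cone (closure (Y_a C X \<Gamma>))))"

definition finite_eps_solution ::
  "ereal \<Rightarrow> real \<Rightarrow> (real^'m) set \<Rightarrow> (real^'n) set \<Rightarrow> (real^'n \<Rightarrow> real^'m) \<Rightarrow> ((real^'n) \<times> (real^'m)) set \<Rightarrow> bool" where
  "finite_eps_solution p eps C X \<Gamma> Sb \<longleftrightarrow> Sb \<noteq> {} \<and> finite Sb \<and> Sb \<subseteq> S_a C X \<Gamma> \<and>
     Y_a C X \<Gamma> \<subseteq> msum (msum (convex hull (snd ` Sb)) (rec_cone (closure (Y_a C X \<Gamma>)))) (pball p eps)"

end

theory Submission
  imports Defs
begin

text \<open>
  Both parts compare the upper image \<open>G = cl Y\<^sub>a\<close> with the sets \<open>K + C\<close>, where \<open>K\<close> is the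
  convex hull of finitely many image points. Since \<open>Y\<^sub>a + C \<subseteq> Y\<^sub>a\<close>, the closure of \<open>C\<close> lies in
  the recession cone of \<open>G\<close>; since \<open>K\<close> is compact, \<open>K + cl C\<close> is closed and lies between
  \<open>K + C\<close> and its closure, so p-norm distances to \<open>K + C\<close> are attained on \<open>K + cl C\<close>.

  (1) The Hausdorff bound puts every \<open>y \<in> Y\<^sub>a\<close> within \<open>\<epsilon>\<close> of a point of \<open>K + cl C\<close>, and
  \<open>cl C\<close> is part of the recession cone; self-boundedness comes from \<open>G \<subseteq> q + C\<close>.

  (2) Every solution point lies in \<open>\<Gamma>(x) + C\<close>, so by convexity the hull of the solution points
  lies in \<open>K + C\<close>; hence \<open>Y\<^sub>a\<close>, and as the covering set is closed also \<open>G\<close>, lies in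
  \<open>K + cl C + B\<^sub>\<epsilon>\<close>, every point of which is within \<open>\<epsilon>\<close> of \<open>K + C\<close>. Conversely \<open>K + C \<subseteq> Y\<^sub>a\<close>
  by \<open>C\<close>-convexity of \<open>\<Gamma>\<close>. The bound obtained is \<open>\<epsilon>\<close> itself.
\<close>

subsection \<open>Minkowski sums and recession cones\<close>

lemma msum_eq_set_plus: "msum A B = A + B"
  by (auto simp: msum_def set_plus_def)

lemma closed_compact_closed_set_plus:
  fixes A B :: "'a::real_normed_vector set"
  assumes "compact A" "closed B"
  shows "closed (A + B)"
proof -
  have "A + B = (\<Union>x\<in>A. \<Union>y\<in>B. {x + y})"
    by (auto simp: set_plus_def)
  then show ?thesis
    using compact_closed_sums[OF assms] by simp
qed

lemma convex_cone_set_plus_subset: "convex_cone C \<Longrightarrow> C + C \<subseteq> C"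
  by (auto simp: set_plus_def convex_cone_add)

lemma convex_cone_closure_set_plus_subset:
  fixes C :: "'a::real_normed_vector set"
  assumes "convex_cone C"
  shows "closure C + closure C \<subseteq> closure C"
  using closure_sum[of C C] closure_mono[OF convex_cone_set_plus_subset[OF assms]] by blast

lemma closure_cone_subset_rec_cone_closure:
  fixes A C :: "'a::real_normed_vector set"
  assumes C: "convex_cone C" and AC: "A + C \<subseteq> A"
  shows "closure C \<subseteq> rec_cone (closure A)"
proof
  fix y assume y: "y \<in> closure C"
  have "x + t *\<^sub>R y \<in> closure A" if x: "x \<in> closure A" and t: "0 \<le> t" for x t
  proof -
    have "t *\<^sub>R y \<in> closure ((*\<^sub>R) t ` C)"
      using y closure_scaleR[of t C] by blast
    also have "\<dots> \<subseteq> closure C"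
      using convex_cone_scaleR[OF C t] by (intro closure_mono) auto
    finally have "x + t *\<^sub>R y \<in> closure A + closure C"
      using x by blast
    also have "\<dots> \<subseteq> closure A"
      using closure_sum[of A C] closure_mono[OF AC] by blast
    finally show ?thesis .
  qed
  then show "y \<in> rec_cone (closure A)"
    by (simp add: rec_cone_def)
qed

subsection \<open>The p-norm\<close>

lemma pnorm_uminus [simp]: "pnorm p (- v) = pnorm p v"
  unfolding pnorm_def by simp

lemma pnorm_minus_commute: "pnorm p (a - b) = pnorm p (b - a)"
  by (metis pnorm_uminus minus_diff_eq)

lemma pnorm_0 [simp]: "pnorm p 0 = 0"
  unfolding pnorm_def by simp

lemma abs_component_le_pnorm:
  assumes p: "1 \<le> p"
  shows "\<bar>v $ i\<bar> \<le> pnorm p v"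
proof (cases "p = \<infinity>")
  case True
  then show ?thesis
    unfolding pnorm_def by (auto intro: Max_ge)
next
  case False
  define r where "r = real_of_ereal p"
  have r: "1 \<le> r"
    using p False unfolding r_def by (cases p) auto
  have "\<bar>v $ i\<bar> = (\<bar>v $ i\<bar> powr r) powr (1 / r)"
    using r by (simp add: powr_powr)
  also have "\<dots> \<le> (\<Sum>j\<in>UNIV. \<bar>v $ j\<bar> powr r) powr (1 / r)"
    using r by (intro powr_mono2 member_le_sum) auto
  finally show ?thesis
    using False unfolding pnorm_def r_def by simp
qed

lemma pnorm_nonneg: "1 \<le> p \<Longrightarrow> 0 \<le> pnorm p v"
  using abs_component_le_pnorm abs_ge_zero order_trans by blast

lemma norm_le_card_mult_pnorm:
  fixes v :: "real^'m"
  assumes "1 \<le> p"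
  shows "norm v \<le> real CARD('m) * pnorm p v"
proof -
  have "norm v \<le> (\<Sum>i\<in>UNIV. \<bar>v $ i\<bar>)"
    by (rule norm_le_l1_cart)
  also have "\<dots> \<le> (\<Sum>i\<in>(UNIV::'m set). pnorm p v)"
    using abs_component_le_pnorm[OF assms] by (intro sum_mono) auto
  finally show ?thesis
    by simp
qed

lemma continuous_on_pnorm:
  assumes p: "1 \<le> p" and f: "continuous_on S f"
  shows "continuous_on S (\<lambda>x. pnorm p (f x :: real^'m))"
proof -
  have "continuous_on UNIV (pnorm p :: real^'m \<Rightarrow> real)"
  proof (cases "p = \<infinity>")
    case True
    have le: "pnorm p y \<le> pnorm p z + norm (y - z)" for y z :: "real^'m"
    proof -
      have "\<bar>y $ i\<bar> \<le> pnorm p z + norm (y - z)" for i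
        using abs_component_le_pnorm[OF p, of z i] component_le_norm_cart[of "y - z" i] by auto
      then show ?thesis
        using True unfolding pnorm_def by (auto simp: Max_le_iff)
    qed
    have "1-lipschitz_on UNIV (pnorm p :: real^'m \<Rightarrow> real)"
    proof (rule lipschitz_onI)
      fix y z :: "real^'m"
      show "dist (pnorm p y) (pnorm p z) \<le> 1 * dist y z"
        using le[of y z] le[of z y] by (auto simp: dist_real_def dist_norm norm_minus_commute)
    qed simp
    then show ?thesis
      by (rule lipschitz_on_continuous_on)
  next
    case False
    define r where "r = real_of_ereal p"
    have r: "1 \<le> r"
      using p False unfolding r_def by (cases p) auto
    have "continuous_on UNIV (\<lambda>v::real^'m. (\<Sum>j\<in>UNIV. \<bar>v $ j\<bar> powr r) powr (1 / r))"
      using r by (intro continuous_on_powr' continuous_intros) (auto intro: sum_nonneg)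
    then show ?thesis
      using False unfolding pnorm_def r_def by simp
  qed
  then show ?thesis
    using continuous_on_compose2[OF _ f] by blast
qed

lemma bounded_pnorm_le:
  assumes "1 \<le> p"
  shows "bounded {v :: real^'m. pnorm p (y - v) \<le> r}"
  unfolding bounded_iff
proof (intro exI ballI)
  fix v assume "v \<in> {v :: real^'m. pnorm p (y - v) \<le> r}"
  then have "norm (y - v) \<le> real CARD('m) * r"
    using norm_le_card_mult_pnorm[OF assms, of "y - v"] by (simp add: order_trans)
  then show "norm v \<le> norm y + real CARD('m) * r"
    using norm_triangle_sub[of v y] by (simp add: norm_minus_commute)
qed

lemma compact_pball:
  assumes p: "1 \<le> p"
  shows "compact (pball p r :: (real^'m) set)"
proof -
  have "closed (pball p r :: (real^'m) set)"
    unfolding pball_def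
    by (intro closed_Collect_le continuous_on_pnorm[OF p] continuous_on_id continuous_on_const)
  moreover have "bounded (pball p r :: (real^'m) set)"
    using bounded_pnorm_le[OF p, of 0 r] by (simp add: pball_def)
  ultimately show ?thesis
    by (simp add: compact_eq_bounded_closed)
qed

lemma pnorm_distance_attained:
  fixes S :: "(real^'m) set"
  assumes p: "1 \<le> p" and S: "closed S" "S \<noteq> {}"
  obtains b where "b \<in> S" "\<And>b'. b' \<in> S \<Longrightarrow> pnorm p (y - b) \<le> pnorm p (y - b')"
proof -
  obtain b1 where b1: "b1 \<in> S"
    using S by blast
  define T where "T = S \<inter> {b. pnorm p (y - b) \<le> pnorm p (y - b1)}"
  have cont: "continuous_on U (\<lambda>b. pnorm p (y - b))" for U
    by (intro continuous_on_pnorm[OF p] continuous_intros)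
  have "closed T"
    unfolding T_def using S(1) closed_Collect_le[OF cont continuous_on_const] by (rule closed_Int)
  moreover have "bounded T"
    unfolding T_def by (rule bounded_Int[OF disjI2[OF bounded_pnorm_le[OF p]]])
  ultimately have "compact T"
    by (simp add: compact_eq_bounded_closed)
  moreover have "T \<noteq> {}"
    using b1 by (auto simp: T_def)
  ultimately have "\<exists>b\<in>T. \<forall>b'\<in>T. pnorm p (y - b) \<le> pnorm p (y - b')"
    using cont by (rule continuous_attains_inf)
  then obtain b where b: "b \<in> T"
    and min: "\<And>b'. b' \<in> T \<Longrightarrow> pnorm p (y - b) \<le> pnorm p (y - b')"
    by blast
  have b1T: "b1 \<in> T"
    using b1 by (simp add: T_def)
  have "pnorm p (y - b) \<le> pnorm p (y - b')" if "b' \<in> S" for b'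
  proof (cases "b' \<in> T")
    case True
    then show ?thesis
      by (rule min)
  next
    case False
    then have "pnorm p (y - b1) < pnorm p (y - b')"
      using that by (simp add: T_def)
    then show ?thesis
      using min[OF b1T] by linarith
  qed
  moreover have "b \<in> S"
    using b by (simp add: T_def)
  ultimately show ?thesis
    using that by blast
qed

subsection \<open>Distance to a set\<close>

definition pnorm_setdist :: "ereal \<Rightarrow> real^'m \<Rightarrow> (real^'m) set \<Rightarrow> ereal" where
  "pnorm_setdist p a B = (INF b\<in>B. ereal (pnorm p (a - b)))"

lemma hdist_p_le_iff:
  "hdist_p p A B \<le> e \<longleftrightarrow>
     (\<forall>a\<in>A. pnorm_setdist p a B \<le> e) \<and> (\<forall>b\<in>B. pnorm_setdist p b A \<le> e)"
  unfolding hdist_p_def pnorm_setdist_def by (simp add: SUP_le_iff pnorm_minus_commute)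

lemma pnorm_setdist_le_closure:
  assumes p: "1 \<le> p" and b: "b \<in> closure B"
  shows "pnorm_setdist p a B \<le> ereal (pnorm p (a - b))"
proof (cases "pnorm_setdist p a B")
  case (real r)
  have "continuous_on (closure B) (\<lambda>b. pnorm p (a - b))"
    by (intro continuous_on_pnorm[OF p] continuous_intros)
  moreover have "r \<le> pnorm p (a - b')" if "b' \<in> B" for b'
    using INF_lower[OF that, of "\<lambda>b. ereal (pnorm p (a - b))"] real
    by (simp add: pnorm_setdist_def)
  ultimately have "r \<le> pnorm p (a - b)"
    using continuous_ge_on_closure[OF _ b] by blast
  then show ?thesis
    using real by simp
next
  case PInf
  obtain b' where "b' \<in> B"
    using b by fastforce
  then have "pnorm_setdist p a B \<le> ereal (pnorm p (a - b'))"
    unfolding pnorm_setdist_def by (rule INF_lower)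
  then show ?thesis
    using PInf by simp
qed simp

lemma closure_point_within_pnorm_setdist:
  assumes p: "1 \<le> p" and B: "B \<noteq> {}" and d: "pnorm_setdist p a B \<le> ereal e"
  obtains b where "b \<in> closure B" "pnorm p (a - b) \<le> e"
proof -
  obtain b where b: "b \<in> closure B"
    and min: "\<And>b'. b' \<in> closure B \<Longrightarrow> pnorm p (a - b) \<le> pnorm p (a - b')"
    using pnorm_distance_attained[OF p, of "closure B" a] B by auto
  have "ereal (pnorm p (a - b)) \<le> pnorm_setdist p a B"
    unfolding pnorm_setdist_def using min closure_subset by (fastforce intro!: INF_greatest)
  then have "ereal (pnorm p (a - b)) \<le> ereal e"
    using d by (rule order_trans)
  then show ?thesis
    using that[OF b] by simp
qed

subsection \<open>The image of the convex projection\<close>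

lemma Y_a_eq_set_plus: "Y_a C X \<Gamma> = \<Gamma> ` X + C"
  unfolding Y_a_def S_a_def msum_def set_plus_def by (auto simp: image_iff; blast)

lemma upper_image_eq_closure_Y_a: "upper_image C X \<Gamma> = closure (Y_a C X \<Gamma>)"
  by (simp add: upper_image_def Y_a_eq_set_plus msum_eq_set_plus)

lemma graph_mem_S_a: "x \<in> X \<Longrightarrow> 0 \<in> C \<Longrightarrow> (x, \<Gamma> x) \<in> S_a C X \<Gamma>"
  by (force simp: S_a_def msum_def)

lemma Y_a_set_plus_cone_subset: "convex_cone C \<Longrightarrow> Y_a C X \<Gamma> + C \<subseteq> Y_a C X \<Gamma>"
  unfolding Y_a_eq_set_plus add.assoc by (intro set_plus_mono2 order_refl convex_cone_set_plus_subset)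

lemma closure_cone_subset_rec_cone_closure_Y_a:
  "convex_cone C \<Longrightarrow> closure C \<subseteq> rec_cone (closure (Y_a C X \<Gamma>))"
  by (intro closure_cone_subset_rec_cone_closure Y_a_set_plus_cone_subset)

lemma convex_Y_a:
  assumes C: "convex_cone C" and X: "convex X" and \<Gamma>: "C_convex C X \<Gamma>"
  shows "convex (Y_a C X \<Gamma>)"
  unfolding convex_alt
proof (intro ballI allI impI)
  fix y1 y2 and u :: real
  assume "y1 \<in> Y_a C X \<Gamma>" "y2 \<in> Y_a C X \<Gamma>" and u: "0 \<le> u \<and> u \<le> 1"
  then obtain x1 c1 x2 c2 where x1: "x1 \<in> X" "c1 \<in> C" "y1 = \<Gamma> x1 + c1"
    and x2: "x2 \<in> X" "c2 \<in> C" "y2 = \<Gamma> x2 + c2"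
    unfolding Y_a_eq_set_plus by (auto elim!: set_plus_elim)
  define x where "x = (1 - u) *\<^sub>R x1 + u *\<^sub>R x2"
  have "x \<in> X"
    using X x1(1) x2(1) u unfolding x_def convex_alt by blast
  have "(1 - u) *\<^sub>R \<Gamma> x1 + u *\<^sub>R \<Gamma> x2 - \<Gamma> x \<in> C"
    using \<Gamma>[unfolded C_convex_def, rule_format, OF x1(1) x2(1), of "1 - u"] u
    by (simp add: x_def)
  moreover have "(1 - u) *\<^sub>R c1 + u *\<^sub>R c2 \<in> C"
    using u x1 x2 by (intro convex_cone_add[OF C] convex_cone_scaleR[OF C]) auto
  ultimately have c: "((1 - u) *\<^sub>R \<Gamma> x1 + u *\<^sub>R \<Gamma> x2 - \<Gamma> x) + ((1 - u) *\<^sub>R c1 + u *\<^sub>R c2) \<in> C"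
    by (rule convex_cone_add[OF C])
  have "(1 - u) *\<^sub>R y1 + u *\<^sub>R y2
      = \<Gamma> x + (((1 - u) *\<^sub>R \<Gamma> x1 + u *\<^sub>R \<Gamma> x2 - \<Gamma> x) + ((1 - u) *\<^sub>R c1 + u *\<^sub>R c2))"
    using x1(3) x2(3) by (simp add: algebra_simps)
  then show "(1 - u) *\<^sub>R y1 + u *\<^sub>R y2 \<in> Y_a C X \<Gamma>"
    using set_plus_intro[OF imageI[OF \<open>x \<in> X\<close>, of \<Gamma>] c] unfolding Y_a_eq_set_plus by (simp only:)
qed

lemma self_bounded_if_cvop_bounded:
  assumes C: "ordering_cone C" and bounded: "cvop_bounded C X \<Gamma>"
  shows "self_bounded C X \<Gamma>"
proof -
  have Cc: "convex_cone C" and "C \<noteq> UNIV"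
    using C by (auto simp: ordering_cone_def)
  obtain q where q: "closure (Y_a C X \<Gamma>) \<subseteq> {q} + C"
    using bounded by (auto simp: cvop_bounded_def upper_image_eq_closure_Y_a msum_eq_set_plus)
  have "Y_a C X \<Gamma> \<noteq> UNIV"
  proof
    assume "Y_a C X \<Gamma> = UNIV"
    then have "q + w \<in> {q} + C" for w
      using q by auto
    then have "C = UNIV"
      by (auto simp: set_plus_def)
    with \<open>C \<noteq> UNIV\<close> show False ..
  qed
  moreover have "Y_a C X \<Gamma> \<subseteq> convex hull {q} + rec_cone (closure (Y_a C X \<Gamma>))"
  proof -
    have "Y_a C X \<Gamma> \<subseteq> {q} + C"
      using q closure_subset by blast
    also have "\<dots> \<subseteq> convex hull {q} + rec_cone (closure (Y_a C X \<Gamma>))"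
      using closure_cone_subset_rec_cone_closure_Y_a[OF Cc, of X \<Gamma>] closure_subset[of C]
      by (intro set_plus_mono2) auto
    finally show ?thesis .
  qed
  ultimately show ?thesis
    unfolding self_bounded_def msum_eq_set_plus by blast
qed

lemma finite_eps_solution_if_hausdorff_infimizer:
  assumes p: "1 \<le> p" and C: "convex_cone C" and infimizer: "hausdorff_infimizer p eps C X \<Gamma> Xb"
  shows "finite_eps_solution p eps C X \<Gamma> ((\<lambda>x. (x, \<Gamma> x)) ` Xb)"
proof -
  define Y where "Y = Y_a C X \<Gamma>"
  define K where "K = convex hull (\<Gamma> ` Xb)"
  have Xb: "Xb \<noteq> {}" "finite Xb" "Xb \<subseteq> X"
    and near: "\<And>y. y \<in> closure Y \<Longrightarrow> pnorm_setdist p y (K + C) \<le> eps"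
    using infimizer
    by (auto simp: hausdorff_infimizer_def hdist_p_le_iff upper_image_eq_closure_Y_a
        msum_eq_set_plus Y_def K_def)
  have "compact K"
    unfolding K_def using Xb by (intro compact_convex_hull finite_imp_compact) auto
  then have "closure (K + C) \<subseteq> K + closure C"
    by (intro closure_minimal set_plus_mono2 order_refl closure_subset
        closed_compact_closed_set_plus closed_closure)
  also have "\<dots> \<subseteq> K + rec_cone (closure Y)"
    unfolding Y_def using closure_cone_subset_rec_cone_closure_Y_a[OF C] by (rule set_plus_mono2[OF order_refl])
  finally have closure_KC: "closure (K + C) \<subseteq> K + rec_cone (closure Y)" .
  have "K + C \<noteq> {}"
    using Xb(1) convex_cone_contains_0[OF C] hull_subset[of "\<Gamma> ` Xb" convex]
    by (auto simp: K_def set_plus_def)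
  have "Y \<subseteq> K + rec_cone (closure Y) + pball p eps"
  proof
    fix y assume "y \<in> Y"
    then obtain b where b: "b \<in> closure (K + C)" "pnorm p (y - b) \<le> eps"
      using near closure_subset closure_point_within_pnorm_setdist[OF p \<open>K + C \<noteq> {}\<close>] by blast
    have "b + (y - b) \<in> K + rec_cone (closure Y) + pball p eps"
      using closure_KC b by (intro set_plus_intro) (auto simp: pball_def)
    then show "y \<in> K + rec_cone (closure Y) + pball p eps"
      by simp
  qed
  moreover have "(\<lambda>x. (x, \<Gamma> x)) ` Xb \<subseteq> S_a C X \<Gamma>"
    using Xb(3) graph_mem_S_a[OF _ convex_cone_contains_0[OF C]] by blast
  ultimately show ?thesis
    using Xb unfolding finite_eps_solution_def
    by (simp add: image_image msum_eq_set_plus Y_def K_def)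
qed

lemma convex_hull_image_set_plus_subset_Y_a:
  assumes C: "convex_cone C" and X: "convex X" and \<Gamma>: "C_convex C X \<Gamma>" and Xb: "Xb \<subseteq> X"
  shows "convex hull (\<Gamma> ` Xb) + C \<subseteq> Y_a C X \<Gamma>"
proof -
  have "\<Gamma> x \<in> Y_a C X \<Gamma>" if "x \<in> Xb" for x
    using set_plus_intro[OF imageI[of x X \<Gamma>] convex_cone_contains_0[OF C]] Xb that
    by (auto simp: Y_a_eq_set_plus)
  then have "convex hull (\<Gamma> ` Xb) \<subseteq> Y_a C X \<Gamma>"
    using convex_Y_a[OF C X \<Gamma>] by (intro hull_minimal) auto
  then have "convex hull (\<Gamma> ` Xb) + C \<subseteq> Y_a C X \<Gamma> + C"
    by (rule set_plus_mono2[OF _ order_refl])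
  also have "\<dots> \<subseteq> Y_a C X \<Gamma>"
    using Y_a_set_plus_cone_subset[OF C] .
  finally show ?thesis .
qed

lemma finite_eps_solution_nonneg:
  assumes p: "1 \<le> p" and sol: "finite_eps_solution p eps C X \<Gamma> Sb"
  shows "0 \<le> eps"
proof -
  obtain z where "z \<in> Sb" "Sb \<subseteq> S_a C X \<Gamma>"
    using sol by (auto simp: finite_eps_solution_def)
  then have "snd z \<in> Y_a C X \<Gamma>"
    by (auto simp: Y_a_def)
  then have "snd z \<in> convex hull (snd ` Sb) + rec_cone (closure (Y_a C X \<Gamma>)) + pball p eps"
    using sol by (auto simp: finite_eps_solution_def msum_eq_set_plus)
  then obtain a e where "snd z = a + e"
    and "a \<in> convex hull (snd ` Sb) + rec_cone (closure (Y_a C X \<Gamma>))" and "e \<in> pball p eps"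
    by (rule set_plus_elim)
  then show ?thesis
    using pnorm_nonneg[OF p, of e] by (simp add: pball_def)
qed

lemma closure_Y_a_subset_if_finite_eps_solution:
  assumes p: "1 \<le> p" and C: "convex_cone C"
    and rec: "rec_cone (closure (Y_a C X \<Gamma>)) = closure C"
    and sol: "finite_eps_solution p eps C X \<Gamma> Sb"
  shows "closure (Y_a C X \<Gamma>) \<subseteq> convex hull (\<Gamma> ` fst ` Sb) + closure C + pball p eps"
proof -
  define K where "K = convex hull (\<Gamma> ` fst ` Sb)"
  have Sb: "finite Sb" "Sb \<subseteq> S_a C X \<Gamma>"
    and cover: "Y_a C X \<Gamma> \<subseteq> convex hull (snd ` Sb) + closure C + pball p eps"
    using sol rec by (auto simp: finite_eps_solution_def msum_eq_set_plus)
  have "snd ` Sb \<subseteq> K + C"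
  proof
    fix y assume "y \<in> snd ` Sb"
    then obtain x where xy: "(x, y) \<in> Sb"
      by force
    then have "\<Gamma> x \<in> K"
      unfolding K_def by (intro hull_inc imageI) force
    moreover have "y - \<Gamma> x \<in> C"
      using xy Sb(2) by (auto simp: S_a_def msum_def)
    ultimately show "y \<in> K + C"
      using set_plus_intro[of "\<Gamma> x" K "y - \<Gamma> x" C] by simp
  qed
  moreover have "convex (K + C)"
    using C unfolding K_def convex_cone_def by (intro convex_set_plus convex_convex_hull) simp
  ultimately have "convex hull (snd ` Sb) \<subseteq> K + C"
    by (rule hull_minimal)
  then have "Y_a C X \<Gamma> \<subseteq> K + (C + closure C) + pball p eps"
    using cover unfolding add.assoc[symmetric] by (meson order_refl set_plus_mono2 subset_trans)
  also have "\<dots> \<subseteq> K + closure C + pball p eps"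
  proof -
    have "C + closure C \<subseteq> closure C + closure C"
      by (intro set_plus_mono2 closure_subset order_refl)
    then have "C + closure C \<subseteq> closure C"
      using convex_cone_closure_set_plus_subset[OF C] by (rule subset_trans)
    then show ?thesis
      by (intro set_plus_mono2 order_refl)
  qed
  finally have "Y_a C X \<Gamma> \<subseteq> K + closure C + pball p eps" .
  moreover have "compact K"
    unfolding K_def using Sb(1) by (intro compact_convex_hull finite_imp_compact) auto
  then have "closed (pball p eps + (K + closure C))"
    by (intro closed_compact_closed_set_plus compact_pball[OF p]) auto
  ultimately show ?thesis
    unfolding K_def by (intro closure_minimal) (simp_all add: add.commute)
qed

lemma hausdorff_infimizer_if_finite_eps_solution:
  assumes p: "1 \<le> p" and C: "convex_cone C" and X: "convex X" and \<Gamma>: "C_convex C X \<Gamma>"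
    and rec: "rec_cone (closure (Y_a C X \<Gamma>)) = closure C"
    and sol: "finite_eps_solution p eps C X \<Gamma> Sb"
  shows "hausdorff_infimizer p eps C X \<Gamma> (fst ` Sb)"
proof -
  define K where "K = convex hull (\<Gamma> ` fst ` Sb)"
  have Sb: "Sb \<noteq> {}" "finite Sb" and Xb: "fst ` Sb \<subseteq> X"
    using sol by (auto simp: finite_eps_solution_def S_a_def)
  have "pnorm_setdist p a (K + C) \<le> eps" if "a \<in> closure (Y_a C X \<Gamma>)" for a
  proof -
    have "a \<in> K + closure C + pball p eps"
      using closure_Y_a_subset_if_finite_eps_solution[OF p C rec sol] that
      unfolding K_def by blast
    then obtain b e where a: "a = b + e" and b: "b \<in> K + closure C" and e: "e \<in> pball p eps"
      by (rule set_plus_elim)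
    have "K + closure C \<subseteq> closure (K + C)"
      using closure_sum[of K C] set_plus_mono2[OF closure_subset order_refl, of K "closure C"]
      by (rule subset_trans[rotated])
    then have "pnorm_setdist p a (K + C) \<le> ereal (pnorm p (a - b))"
      using b by (intro pnorm_setdist_le_closure[OF p]) auto
    also have "\<dots> \<le> eps"
      using a e by (simp add: pball_def)
    finally show ?thesis .
  qed
  moreover have "pnorm_setdist p b (closure (Y_a C X \<Gamma>)) \<le> eps" if "b \<in> K + C" for b
  proof -
    have "b \<in> closure (Y_a C X \<Gamma>)"
      using that convex_hull_image_set_plus_subset_Y_a[OF C X \<Gamma> Xb] closure_subset
      unfolding K_def by blast
    then have "pnorm_setdist p b (closure (Y_a C X \<Gamma>)) \<le> ereal (pnorm p (b - b))"
      by (intro pnorm_setdist_le_closure[OF p]) simp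
    also have "\<dots> \<le> eps"
      using finite_eps_solution_nonneg[OF p sol] by simp
    finally show ?thesis .
  qed
  ultimately show ?thesis
    using Sb Xb
    unfolding hausdorff_infimizer_def hdist_p_le_iff upper_image_eq_closure_Y_a msum_eq_set_plus K_def
    by auto
qed

lemma hausdorff_infimizer_mono:
  "hausdorff_infimizer p eps C X \<Gamma> Xb \<Longrightarrow> eps \<le> \<xi> \<Longrightarrow> hausdorff_infimizer p \<xi> C X \<Gamma> Xb"
  unfolding hausdorff_infimizer_def by (meson ereal_less_eq(3) order_trans)

theorem mainTheorem19:
  fixes p :: ereal and eps :: real
    and C :: "(real^'m) set" and X :: "(real^'n) set" and \<Gamma> :: "real^'n \<Rightarrow> real^'m"
  assumes p: "1 \<le> p"
    and C: "ordering_cone C"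
    and X: "convex X"
    and G: "C_convex C X \<Gamma>"
  shows "(cvop_bounded C X \<Gamma> \<longrightarrow>
            (\<forall>Xb. hausdorff_infimizer p eps C X \<Gamma> Xb \<longrightarrow>
               self_bounded C X \<Gamma> \<and>
               finite_eps_solution p eps C X \<Gamma> ((\<lambda>x. (x, \<Gamma> x)) ` Xb)))
       \<and> ((self_bounded C X \<Gamma> \<and> rec_cone (closure (Y_a C X \<Gamma>)) = closure C) \<longrightarrow>
            (\<forall>Sb. finite_eps_solution p eps C X \<Gamma> Sb \<longrightarrow>
               (\<forall>\<xi>. \<xi> > eps \<longrightarrow> hausdorff_infimizer p \<xi> C X \<Gamma> (fst ` Sb))))"
proof -
  have Cc: "convex_cone C"
    using C by (simp add: ordering_cone_def)
  have part1: "self_bounded C X \<Gamma> \<and> finite_eps_solution p eps C X \<Gamma> ((\<lambda>x. (x, \<Gamma> x)) ` Xb)"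
    if "cvop_bounded C X \<Gamma>" and "hausdorff_infimizer p eps C X \<Gamma> Xb" for Xb
    using self_bounded_if_cvop_bounded[OF C that(1)]
      finite_eps_solution_if_hausdorff_infimizer[OF p Cc that(2)] ..
  have part2: "hausdorff_infimizer p \<xi> C X \<Gamma> (fst ` Sb)"
    if "rec_cone (closure (Y_a C X \<Gamma>)) = closure C" and "finite_eps_solution p eps C X \<Gamma> Sb"
      and "\<xi> > eps" for Sb \<xi>
    using hausdorff_infimizer_if_finite_eps_solution[OF p Cc X G that(1,2)] less_imp_le[OF that(3)]
    by (rule hausdorff_infimizer_mono)
  show ?thesis
    using part1 part2 by blast
qed

end
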